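(* Assume (H1) for some $\alpha\in[0,1]$ and (H2)–(H4). Then: (1) (Sub-critical) If $\lambda\le\lambda_s$, there exists a unique $z\le z_s$ with $\lambda=\sum_{j\ge1}a_jQ_jz^{j+1}+a_1z^2$, and $(Q_iz^i)_{i\ge1}$ is a steady state. Moreover, if $b_i\le i\,a_i$ for all sufficiently large $i$, then $(Q_iz^i)_{i\ge1}$ is the unique steady state; if instead there is $\nu>1$ with $b_i>i^\nu a_i$ for all sufficiently large $i$, then there are infinitely many steady states. (2) (Super-critical) If $\lambda>\lambda_s$, there exists no steady state.
   Context: Let $\lambda\ge 0$ and let $(a_i)_{i\ge1}$, $(b_i)_{i\ge1}$ be sequences of nonnegative real numbers. Consider the infinite system of ODEs $\frac{d}{dt}C_1=\lambda-\sum_{j\ge1}a_jC_1C_j-a_1C_1^2$, $\frac{d}{dt}C_i=J_{i-1}-J_i$ for $i\ge2$, where $J_i=a_iC_1C_i-b_{i+1}C_{i+1}$ for $i\ge1$. A steady state is a sequence $C=(C_i)_{i\ge1}$ of nonnegative reals with $\sum_{i\ge1}a_iC_i<\infty$ such that $\lambda-\sum_{j\ge1}a_jC_1C_j-a_1C_1^2=0$ and $J_{i-1}=J_i$ for all $i\ge2$ (i.e. a constant-in-time solution). (H1): there exists $a\ge0$ such that $0\le a_i\le a\,i^\alpha$ and $b_i\ge0$ for all $i\ge1$. Detailed balance coefficients: $Q_1=1$, $Q_i=\prod_{j=2}^i\frac{a_{j-1}}{b_j}$ for $i\ge2$. $z_s\in[0,+\infty]$ is the radius of convergence of the power series $\sum_i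 a_iQ_iz^i$, and $\lambda_s:=\sup_{z\le z_s}\big(\sum_{j\ge1}a_jQ_jz^{j+1}+a_1z^2\big)$. (H2): $\inf_i a_i=\underline a>0$ and $\inf_i b_i=\underline b>0$. (H3): $\lim_{i\to\infty}Q_{i+1}/Q_i=1/z_s$. (H4): there is $l>0$ with $\lim_{i\to\infty}a_{i+1}/a_i=l$. *)

theory Defs
  imports "HOL-Analysis.Analysis"
begin

text \<open>Sequences are functions nat => real; only indices i >= 1 are meaningful.
  Value at index 0 is ignored (steady states are normalised by C 0 = 0).\<close>

definition Qc :: "(nat \<Rightarrow> real) \<Rightarrow> (nat \<Rightarrow> real) \<Rightarrow> nat \<Rightarrow> real" where
  "Qc a b i = (\<Prod>j=2..i. a (j - 1) / b j)"

definition zs :: "(nat \<Rightarrow> real) \<Rightarrow> (nat \<Rightarrow> real) \<Rightarrow> ereal" where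
  "zs a b = conv_radius (\<lambda>i. if i = 0 then 0 else a i * Qc a b i)"

definition Fz :: "(nat \<Rightarrow> real) \<Rightarrow> (nat \<Rightarrow> real) \<Rightarrow> real \<Rightarrow> ereal" where
  "Fz a b z = (\<Sum>j. ereal (a (Suc j) * Qc a b (Suc j) * z ^ (Suc j + 1))) + ereal (a 1 * z\<^sup>2)"

definition lambda_s :: "(nat \<Rightarrow> real) \<Rightarrow> (nat \<Rightarrow> real) \<Rightarrow> ereal" where
  "lambda_s a b = (SUP z \<in> {z. 0 \<le> z \<and> ereal z \<le> zs a b}. Fz a b z)"

definition Jflux :: "(nat \<Rightarrow> real) \<Rightarrow> (nat \<Rightarrow> real) \<Rightarrow> (nat \<Rightarrow> real) \<Rightarrow> nat \<Rightarrow> real" where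
  "Jflux a b C i = a i * C 1 * C i - b (Suc i) * C (Suc i)"

definition steady_state ::
  "real \<Rightarrow> (nat \<Rightarrow> real) \<Rightarrow> (nat \<Rightarrow> real) \<Rightarrow> (nat \<Rightarrow> real) \<Rightarrow> bool" where
  "steady_state lam a b C \<longleftrightarrow>
     (\<forall>i\<ge>1. 0 \<le> C i) \<and>
     summable (\<lambda>j. a (Suc j) * C (Suc j)) \<and>
     lam - (\<Sum>j. a (Suc j) * C 1 * C (Suc j)) - a 1 * (C 1)\<^sup>2 = 0 \<and>
     (\<forall>i\<ge>2. Jflux a b C (i - 1) = Jflux a b C i)"

end

theory Submission
  imports Defs
begin

text \<open>In a steady state all fluxes \<open>J\<^sub>i = a\<^sub>i C\<^sub>1 C\<^sub>i - b\<^sub>i\<^sub>+\<^sub>1 C\<^sub>i\<^sub>+\<^sub>1\<close> equal one constant \<open>J\<close>,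
  and \<open>J \<le> 0\<close> because \<open>a\<^sub>i C\<^sub>i \<rightarrow> 0\<close>. If \<open>J = 0\<close>, detailed balance gives \<open>C\<^sub>i = Q\<^sub>i C\<^sub>1\<^sup>i\<close>
  and the mass equation says \<open>\<lambda> = F(C\<^sub>1)\<close> with \<open>C\<^sub>1 \<le> z\<^sub>s\<close>, where \<open>F\<close> is strictly increasing;
  if \<open>J < 0\<close>, then \<open>\<Sum> a\<^sub>i/b\<^sub>i < \<infinity>\<close>. That series diverges if \<open>b\<^sub>i \<le> i a\<^sub>i\<close>, and also
  under (H3), (H4) once \<open>z\<^sub>s < \<infinity>\<close>, which \<open>\<lambda> > \<lambda>\<^sub>s\<close> forces: this gives uniqueness and
  nonexistence. For \<open>\<lambda> \<le> \<lambda>\<^sub>s\<close> the value \<open>\<lambda>\<close> is taken by \<open>F\<close> inside the disc of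
  convergence (intermediate value theorem) or else at \<open>z\<^sub>s\<close> itself (lower semicontinuity).
  If \<open>b\<^sub>i > i\<^sup>\<nu> a\<^sub>i\<close>, the corrector \<open>D\<close>, solving the flux equations with \<open>C\<^sub>1 = c\<close> and all
  fluxes \<open>-1\<close>, has \<open>\<Sum> a\<^sub>i D\<^sub>i < \<infinity>\<close>, and \<open>Q\<^sub>i c\<^sup>i + t D\<^sub>i\<close> with a suitable \<open>t > 0\<close>
  is a steady state for every \<open>0 < c < z\<close>.\<close>

lemma recursive_bound_le_max:
  fixes x r :: "nat \<Rightarrow> real"
  assumes c: "0 \<le> c"
    and recursion: "\<And>n. N \<le> n \<Longrightarrow>
      0 \<le> r (Suc n) \<and> r (Suc n) * (c + 1) \<le> 1 / 2 \<and> x (Suc n) \<le> r (Suc n) * (c * x n + 1)"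
    and n: "N \<le> n"
  shows "x n \<le> max (x N) 2"
  using n
proof (induction n rule: dec_induct)
  case (step n)
  define M where "M = max (x N) 2"
  have M: "2 \<le> M" by (simp add: M_def)
  have r: "0 \<le> r (Suc n)" "r (Suc n) * (c + 1) \<le> 1 / 2"
    using step.hyps(1) recursion by auto
  have "c * x n + 1 \<le> c * M + 1"
    using step.IH c by (simp add: M_def mult_left_mono)
  then have "x (Suc n) \<le> r (Suc n) * (c * M + 1)"
    using step.hyps(1) recursion by (meson mult_left_mono order_trans)
  also have "\<dots> \<le> r (Suc n) * ((c + 1) * M)"
    by (rule mult_left_mono) (use M r(1) in \<open>auto simp: algebra_simps\<close>)
  also have "\<dots> \<le> 1 / 2 * M"
    using mult_right_mono[OF r(2), of M] M by (simp add: mult.assoc)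
  finally show ?case using M unfolding M_def by linarith
qed simp

lemma summable_of_recursive_bound:
  fixes x r :: "nat \<Rightarrow> real"
  assumes r: "summable r" and c: "0 \<le> c"
    and x: "\<forall>\<^sub>F n in sequentially. 0 \<le> x n \<and> 0 \<le> r n \<and> x (Suc n) \<le> r (Suc n) * (c * x n + 1)"
  shows "summable x"
proof -
  have "(\<lambda>n. r (Suc n) * (c + 1)) \<longlonglongrightarrow> 0"
    by (rule tendsto_mult_left_zero[OF LIMSEQ_Suc[OF summable_LIMSEQ_zero[OF r]]])
  from order_tendstoD(2)[OF this, of "1 / 2"]
  have small: "\<forall>\<^sub>F n in sequentially. r (Suc n) * (c + 1) \<le> 1 / 2"
    by (auto elim: eventually_mono)
  obtain N where N: "\<And>n. N \<le> n \<Longrightarrow> 0 \<le> x (Suc n) \<and> 0 \<le> r (Suc n)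
      \<and> r (Suc n) * (c + 1) \<le> 1 / 2 \<and> x (Suc n) \<le> r (Suc n) * (c * x n + 1)"
    using eventually_conj[OF x[THEN eventually_sequentially_Suc[THEN iffD2]] eventually_conj[OF x small]]
    unfolding eventually_sequentially by blast
  define M where "M = max (x N) 2"
  have "norm (x (Suc n)) \<le> r (Suc n) * (c * M + 1)" if "N \<le> n" for n
  proof -
    have "x n \<le> M"
      unfolding M_def by (rule recursive_bound_le_max[OF c _ that, of r]) (use N in blast)
    then have "c * x n + 1 \<le> c * M + 1"
      using c by (simp add: mult_left_mono)
    then show ?thesis
      using N[OF that] by (simp, meson mult_left_mono order_trans)
  qed
  moreover have "summable (\<lambda>n. r (Suc n) * (c * M + 1))"
    using r by (intro summable_mult2) (simp add: summable_Suc_iff)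
  ultimately have "summable (\<lambda>n. x (Suc n))"
    by (rule summable_comparison_test'[rotated])
  then show ?thesis by (simp add: summable_Suc_iff)
qed

lemma pos_if_INF_pos:
  fixes f :: "nat \<Rightarrow> real"
  assumes "0 < (INF i\<in>{1..}. f i)" "\<forall>i\<ge>1. 0 \<le> f i" "1 \<le> i"
  shows "0 < f i"
proof -
  have "bdd_below (f ` {1..})" using assms(2) by (intro bdd_belowI[of _ 0]) auto
  then have "(INF i\<in>{1..}. f i) \<le> f i" using assms(3) by (intro cINF_lower) auto
  then show ?thesis using assms(1) by linarith
qed

locale positive_rates =
  fixes a b :: "nat \<Rightarrow> real"
  assumes a_pos: "1 \<le> i \<Longrightarrow> 0 < a i"
    and b_pos: "1 \<le> i \<Longrightarrow> 0 < b i"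
begin

section \<open>The generating function \<open>F\<close>\<close>

abbreviation Q :: "nat \<Rightarrow> real" where "Q \<equiv> Qc a b"

lemma Q_pos: "0 < Q i"
  unfolding Qc_def by (rule prod_pos) (auto intro!: divide_pos_pos a_pos b_pos)

lemma Q_1 [simp]: "Q 1 = 1" "Q (Suc 0) = 1"
  by (simp_all add: Qc_def)

lemma Q_Suc: "1 \<le> i \<Longrightarrow> Q (Suc i) = Q i * a i / b (Suc i)"
  by (simp add: Qc_def atLeastAtMostSuc_conv mult.commute)

definition aQ :: "nat \<Rightarrow> real" where
  "aQ i = (if i = 0 then 0 else a i * Q i)"

lemma aQ_0 [simp]: "aQ 0 = 0"
  by (simp add: aQ_def)

lemma aQ_nonneg: "0 \<le> aQ i"
  using a_pos[of i] Q_pos[of i] by (cases i) (auto simp: aQ_def)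

lemma zs_eq_conv_radius: "zs a b = conv_radius aQ"
  by (simp add: zs_def aQ_def)

definition F :: "real \<Rightarrow> real" where
  "F z = z * (\<Sum>n. aQ n * z ^ n) + a 1 * z\<^sup>2"

lemma sums_aQ_Suc: "(\<lambda>j. aQ (Suc j) * z ^ Suc j) sums s \<longleftrightarrow> (\<lambda>n. aQ n * z ^ n) sums s"
  using sums_Suc_iff[of "\<lambda>n. aQ n * z ^ n" s] by simp

definition Fz_term :: "real \<Rightarrow> nat \<Rightarrow> real" where
  "Fz_term z j = z * (aQ (Suc j) * z ^ Suc j)"

lemma Fz_eq_Fz_term: "Fz a b z = (\<Sum>j. ereal (Fz_term z j)) + ereal (a 1 * z\<^sup>2)"
  by (simp add: Fz_def Fz_term_def aQ_def mult_ac)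

lemma Fz_term_nonneg: "0 \<le> z \<Longrightarrow> 0 \<le> Fz_term z j"
  by (simp add: Fz_term_def aQ_nonneg)

lemma Fz_term_mono: "0 \<le> z \<Longrightarrow> z \<le> w \<Longrightarrow> Fz_term z j \<le> Fz_term w j"
  unfolding Fz_term_def by (intro mult_mono mult_left_mono power_mono) (auto simp: aQ_nonneg)

lemma Fz_eq_F:
  assumes "summable (\<lambda>n. aQ n * z ^ n)"
  shows "Fz a b z = ereal (F z)"
proof -
  have "Fz_term z sums (z * (\<Sum>n. aQ n * z ^ n))"
    unfolding Fz_term_def
    using sums_mult[OF sums_aQ_Suc[THEN iffD2, OF summable_sums[OF assms]]] .
  then have "(\<Sum>j. ereal (Fz_term z j)) = ereal (z * (\<Sum>n. aQ n * z ^ n))"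
    by (metis sums_summable sums_unique suminf_ereal')
  then show ?thesis by (simp add: Fz_eq_Fz_term F_def)
qed

lemma summable_if_Fz_finite:
  assumes z: "0 \<le> z" and finite: "Fz a b z \<noteq> \<infinity>"
  shows "summable (\<lambda>n. aQ n * z ^ n)"
proof (cases "z = 0")
  case True
  then show ?thesis by simp
next
  case False
  have "(\<Sum>j. ereal (Fz_term z j)) \<noteq> \<infinity>"
    using finite by (auto simp: Fz_eq_Fz_term)
  then have "summable (Fz_term z)"
    using z by (intro summable_ereal Fz_term_nonneg)
  then have "summable (\<lambda>j. aQ (Suc j) * z ^ Suc j)"
    using summable_mult[of "Fz_term z" "1 / z"] False by (simp add: Fz_term_def)
  then show ?thesis
    using summable_Suc_iff[of "\<lambda>n. aQ n * z ^ n"] by simp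
qed

lemma le_zs_if_Fz_finite: "0 \<le> z \<Longrightarrow> Fz a b z \<noteq> \<infinity> \<Longrightarrow> ereal z \<le> zs a b"
  using conv_radius_geI[OF summable_if_Fz_finite] by (simp add: zs_eq_conv_radius)

lemma Fz_0 [simp]: "Fz a b 0 = 0"
  by (simp add: Fz_eq_Fz_term Fz_term_def zero_ereal_def[symmetric])

lemma Fz_ge_quadratic: "0 \<le> z \<Longrightarrow> ereal (a 1 * z\<^sup>2) \<le> Fz a b z"
  unfolding Fz_eq_Fz_term by (intro add_increasing suminf_0_le) (simp_all add: Fz_term_nonneg)

lemma Fz_unbounded: "\<exists>w\<ge>0. ereal M \<le> Fz a b w"
proof -
  define w where "w = max 1 (M / a 1)"
  have "M = a 1 * (M / a 1)" using a_pos[of 1] by simp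
  also have "\<dots> \<le> a 1 * w" using a_pos[of 1] by (intro mult_left_mono) (auto simp: w_def)
  also have "\<dots> \<le> a 1 * w\<^sup>2"
    using a_pos[of 1] mult_left_mono[of 1 w w] by (intro mult_left_mono) (auto simp: w_def power2_eq_square)
  finally have "ereal M \<le> ereal (a 1 * w\<^sup>2)" by simp
  moreover have "0 \<le> w" by (simp add: w_def)
  ultimately show ?thesis using Fz_ge_quadratic order_trans by blast
qed

lemma zs_finite_if_Fz_bounded:
  assumes "\<And>w. 0 \<le> w \<Longrightarrow> ereal w < zs a b \<Longrightarrow> Fz a b w < ereal M"
  shows "zs a b \<noteq> \<infinity>"
proof
  assume "zs a b = \<infinity>"
  moreover obtain w where "0 \<le> w" "ereal M \<le> Fz a b w"
    using Fz_unbounded by blast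
  ultimately show False using assms[of w] by simp
qed

lemma Fz_mono: "0 \<le> z \<Longrightarrow> z \<le> w \<Longrightarrow> Fz a b z \<le> Fz a b w"
  unfolding Fz_eq_Fz_term using a_pos[of 1]
  by (intro add_mono suminf_le_pos) (simp_all add: Fz_term_mono Fz_term_nonneg power_mono)

lemma F_strict_mono:
  assumes z: "0 \<le> z" "z < w" and w: "summable (\<lambda>n. aQ n * w ^ n)"
  shows "summable (\<lambda>n. aQ n * z ^ n)" "F z < F w"
proof -
  have le: "aQ n * z ^ n \<le> aQ n * w ^ n" for n
    using z by (intro mult_left_mono power_mono) (auto simp: aQ_nonneg)
  show summable: "summable (\<lambda>n. aQ n * z ^ n)"
    by (rule summable_comparison_test'[OF w, of 0]) (use le z in \<open>simp add: aQ_nonneg\<close>)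
  have "(\<Sum>n. aQ n * z ^ n) \<le> (\<Sum>n. aQ n * w ^ n)"
    by (rule suminf_le[OF le summable w])
  then have "z * (\<Sum>n. aQ n * z ^ n) \<le> w * (\<Sum>n. aQ n * w ^ n)"
    using z by (intro mult_mono suminf_nonneg summable) (auto simp: aQ_nonneg)
  moreover have "a 1 * z\<^sup>2 < a 1 * w\<^sup>2"
    using z a_pos[of 1] by (intro mult_strict_left_mono power_strict_mono) auto
  ultimately show "F z < F w" by (simp add: F_def)
qed

lemma Fz_inj:
  assumes z: "0 \<le> z" "Fz a b z = ereal M" and w: "0 \<le> w" "Fz a b w = ereal M"
  shows "z = w"
proof -
  have sz: "summable (\<lambda>n. aQ n * z ^ n)" and sw: "summable (\<lambda>n. aQ n * w ^ n)"
    using z w by (simp_all add: summable_if_Fz_finite)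
  have "F z = F w" using z w Fz_eq_F[OF sz] Fz_eq_F[OF sw] by simp
  then show ?thesis
    using F_strict_mono(2)[OF z(1) _ sw] F_strict_mono(2)[OF w(1) _ sz]
    by (cases z w rule: linorder_cases) auto
qed

lemma isCont_F:
  assumes "ereal \<bar>x\<bar> < zs a b"
  shows "isCont F x"
proof -
  obtain K where K: "ereal \<bar>x\<bar> < ereal K" "ereal K < zs a b"
    using ereal_dense2[OF assms] by blast
  have "summable (\<lambda>n. aQ n * K ^ n)"
    using K by (intro summable_in_conv_radius) (simp add: zs_eq_conv_radius)
  then have "isCont (\<lambda>x. \<Sum>n. aQ n * x ^ n) x"
    using K by (intro isCont_powser) auto
  then show ?thesis unfolding F_def by (intro continuous_intros)
qed

lemma Fz_le_if_le_left:
  assumes r: "0 < r" and left: "\<And>x. 0 \<le> x \<Longrightarrow> x < r \<Longrightarrow> Fz a b x \<le> ereal M"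
  shows "Fz a b r \<le> ereal M"
proof -
  define p where "p N x = (\<Sum>j<N. Fz_term x j) + a 1 * x\<^sup>2" for N x
  have "p N r \<le> M" for N
  proof (rule tendsto_upperbound)
    show "(p N \<longlongrightarrow> p N r) (at_left r)"
      unfolding p_def Fz_term_def by (intro tendsto_intros)
    show "\<forall>\<^sub>F x in at_left r. p N x \<le> M"
      using eventually_at_left_real[OF r]
    proof (rule eventually_mono)
      fix x assume x: "x \<in> {0<..<r}"
      have "ereal (p N x) \<le> Fz a b x" (is "_ \<le> ?F")
        unfolding p_def Fz_eq_Fz_term plus_ereal.simps(1)[symmetric] sum_ereal[symmetric]
        using x by (intro add_right_mono suminf_upper) (simp add: Fz_term_nonneg)
      also have "?F \<le> ereal M" using left x by simp
      finally show "p N x \<le> M" by simp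
    qed
  qed simp
  then show ?thesis
    unfolding Fz_eq_Fz_term using r
    by (intro suminf_bound_add) (auto simp: p_def Fz_term_nonneg)
qed

section \<open>Fluxes of steady states\<close>

lemma steady_state_nonneg: "steady_state lam a b C \<Longrightarrow> 1 \<le> i \<Longrightarrow> 0 \<le> C i"
  by (simp add: steady_state_def)

lemma steady_state_summable: "steady_state lam a b C \<Longrightarrow> summable (\<lambda>j. a (Suc j) * C (Suc j))"
  by (simp add: steady_state_def)

lemma steady_state_cong:
  assumes C: "\<And>i. 1 \<le> i \<Longrightarrow> C i = C' i"
  shows "steady_state lam a b C \<longleftrightarrow> steady_state lam a b C'"
proof -
  have C1: "C 1 = C' 1" and CS: "\<And>j. C (Suc j) = C' (Suc j)"
    by (simp_all add: C)
  have J: "Jflux a b C i = Jflux a b C' i" if "1 \<le> i" for i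
    using that by (simp add: Jflux_def C C1 CS)
  have "(\<forall>i\<ge>1. 0 \<le> C i) \<longleftrightarrow> (\<forall>i\<ge>1. 0 \<le> C' i)"
    using C by auto
  moreover have "(\<forall>i\<ge>2. Jflux a b C (i - 1) = Jflux a b C i) \<longleftrightarrow>
      (\<forall>i\<ge>2. Jflux a b C' (i - 1) = Jflux a b C' i)"
    by (auto simp: J)
  ultimately show ?thesis
    unfolding steady_state_def C1 CS by simp
qed

lemma flux_step:
  assumes "steady_state lam a b C" "1 \<le> n"
  shows "Jflux a b C (Suc n) = Jflux a b C n"
proof -
  have "\<forall>i\<ge>2. Jflux a b C (i - 1) = Jflux a b C i"
    using assms(1) by (simp add: steady_state_def)
  then show ?thesis using assms(2) by (auto dest: spec[of _ "Suc n"])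
qed

lemma flux_eq_flux_1:
  assumes "steady_state lam a b C" "1 \<le> i"
  shows "Jflux a b C i = Jflux a b C 1"
  using assms(2) by (induction i rule: dec_induct) (simp_all add: flux_step[OF assms(1)])

lemma flux_identity:
  "steady_state lam a b C \<Longrightarrow> 1 \<le> i \<Longrightarrow> a i * C 1 * C i - b (Suc i) * C (Suc i) = Jflux a b C 1"
  using flux_eq_flux_1[of lam C i] by (simp add: Jflux_def)

lemma flux_nonpos:
  assumes ss: "steady_state lam a b C"
  shows "Jflux a b C 1 \<le> 0"
proof (rule ccontr)
  assume "\<not> Jflux a b C 1 \<le> 0"
  then have J: "0 < Jflux a b C 1" by simp
  have lower: "Jflux a b C 1 \<le> a i * C 1 * C i" if "1 \<le> i" for i
  proof -
    have "0 \<le> b (Suc i) * C (Suc i)"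
      using b_pos[of "Suc i"] steady_state_nonneg[OF ss, of "Suc i"] by simp
    then show ?thesis using flux_identity[OF ss that] by linarith
  qed
  have "0 < C 1"
    using lower[of 1] J steady_state_nonneg[OF ss, of 1] by (cases "C 1 = 0") auto
  then have "Jflux a b C 1 / C 1 \<le> a (Suc j) * C (Suc j)" for j
    using lower[of "Suc j"] by (simp add: pos_divide_le_eq mult_ac)
  moreover have "(\<lambda>j. a (Suc j) * C (Suc j)) \<longlonglongrightarrow> 0"
    using steady_state_summable[OF ss] by (rule summable_LIMSEQ_zero)
  ultimately have "Jflux a b C 1 / C 1 \<le> 0"
    by (intro tendsto_lowerbound[of "\<lambda>j. a (Suc j) * C (Suc j)"]) auto
  with J \<open>0 < C 1\<close> show False by (simp add: divide_le_0_iff)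
qed

text \<open>A negative flux \<open>J\<close> forces \<open>b\<^sub>i C\<^sub>i \<ge> -J\<close>, so \<open>a\<^sub>i/b\<^sub>i \<le> a\<^sub>i C\<^sub>i / (-J)\<close>.\<close>

lemma summable_ratio_if_flux_neg:
  assumes ss: "steady_state lam a b C" and neg: "Jflux a b C 1 < 0"
  shows "summable (\<lambda>j. a (Suc j) / b (Suc j))"
proof -
  define J where "J = - Jflux a b C 1"
  have J: "0 < J" using neg by (simp add: J_def)
  show ?thesis
  proof (rule summable_comparison_test'[where N = 1])
    show "summable (\<lambda>j. a (Suc j) * C (Suc j) / J)"
      using steady_state_summable[OF ss] by (rule summable_divide)
    fix n :: nat assume n: "1 \<le> n"
    have "0 \<le> a n * C 1 * C n"
      using a_pos[OF n] steady_state_nonneg[OF ss] n by simp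
    then have "J \<le> b (Suc n) * C (Suc n)"
      using flux_identity[OF ss n] by (simp add: J_def)
    then have "a (Suc n) * J \<le> a (Suc n) * (b (Suc n) * C (Suc n))"
      using a_pos[of "Suc n"] by (intro mult_left_mono) auto
    then show "norm (a (Suc n) / b (Suc n)) \<le> a (Suc n) * C (Suc n) / J"
      using J a_pos[of "Suc n"] b_pos[of "Suc n"] by (simp add: field_simps)
  qed
qed

lemma detailed_balance_if_flux_zero:
  assumes ss: "steady_state lam a b C" and J: "Jflux a b C 1 = 0" and i: "1 \<le> i"
  shows "C i = Q i * C 1 ^ i"
  using i
proof (induction i rule: dec_induct)
  case (step n)
  have "b (Suc n) * C (Suc n) = a n * C 1 * C n"
    using flux_identity[OF ss step.hyps(1)] J by simp
  also have "\<dots> = b (Suc n) * (Q (Suc n) * C 1 ^ Suc n)"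
    using step.IH Q_Suc[OF step.hyps(1)] b_pos[of "Suc n"] by simp
  finally show ?case
    using b_pos[of "Suc n"] by simp
qed simp

lemma flux_detailed_balance: "1 \<le> i \<Longrightarrow> Jflux a b (\<lambda>i. Q i * c ^ i) i = 0"
proof -
  assume i: "1 \<le> i"
  have "b (Suc i) * Q (Suc i) = a i * Q i" using Q_Suc[OF i] b_pos[of "Suc i"] by simp
  then show ?thesis by (simp add: Jflux_def mult_ac)
qed

lemma steady_state_detailed_balance_iff:
  "steady_state lam a b (\<lambda>i. Q i * c ^ i) \<longleftrightarrow> 0 \<le> c \<and> Fz a b c = ereal lam"
proof -
  have aQ_Suc: "(\<lambda>j. a (Suc j) * (Q (Suc j) * c ^ Suc j)) = (\<lambda>j. aQ (Suc j) * c ^ Suc j)"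
    by (simp add: aQ_def mult.assoc)
  have summable_iff: "summable (\<lambda>j. aQ (Suc j) * c ^ Suc j) \<longleftrightarrow> summable (\<lambda>n. aQ n * c ^ n)"
    using summable_Suc_iff[of "\<lambda>n. aQ n * c ^ n"] by simp
  have sum: "(\<Sum>j. a (Suc j) * (Q 1 * c ^ 1) * (Q (Suc j) * c ^ Suc j)) = F c - a 1 * c\<^sup>2"
    if "summable (\<lambda>n. aQ n * c ^ n)"
    using sums_unique[OF sums_mult[OF sums_aQ_Suc[THEN iffD2, OF summable_sums[OF that]], of c]]
    by (simp add: F_def aQ_def mult_ac)
  have nonneg: "(\<forall>i\<ge>1. 0 \<le> Q i * c ^ i) \<longleftrightarrow> 0 \<le> c"
  proof
    show "\<forall>i\<ge>1. 0 \<le> Q i * c ^ i \<Longrightarrow> 0 \<le> c" by (auto dest: spec[of _ 1])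
  qed (simp add: Q_pos less_imp_le)
  have "\<forall>i\<ge>2. Jflux a b (\<lambda>i. Q i * c ^ i) (i - 1) = Jflux a b (\<lambda>i. Q i * c ^ i) i"
    by (simp add: flux_detailed_balance)
  then have "steady_state lam a b (\<lambda>i. Q i * c ^ i) \<longleftrightarrow>
      0 \<le> c \<and> summable (\<lambda>n. aQ n * c ^ n) \<and> lam = F c"
    unfolding steady_state_def aQ_Suc summable_iff nonneg
    using sum by auto
  then show ?thesis
    using Fz_eq_F[of c] summable_if_Fz_finite[of c] by auto
qed

lemma steady_state_zero_flux:
  assumes ss: "steady_state lam a b C" and J: "Jflux a b C 1 = 0"
  shows "0 \<le> C 1" "ereal (C 1) \<le> zs a b" "Fz a b (C 1) = ereal lam"
proof -
  have "steady_state lam a b C \<longleftrightarrow> steady_state lam a b (\<lambda>i. Q i * C 1 ^ i)"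
    by (rule steady_state_cong) (rule detailed_balance_if_flux_zero[OF ss J])
  then show "0 \<le> C 1" "Fz a b (C 1) = ereal lam"
    using ss by (simp_all add: steady_state_detailed_balance_iff)
  then show "ereal (C 1) \<le> zs a b" by (simp add: le_zs_if_Fz_finite)
qed

lemma flux_zero_if_not_summable_ratio:
  assumes "steady_state lam a b C" "\<not> summable (\<lambda>j. a (Suc j) / b (Suc j))"
  shows "Jflux a b C 1 = 0"
  using assms(2) flux_nonpos[OF assms(1)] summable_ratio_if_flux_neg[OF assms(1)] by fastforce

lemma not_summable_ratio_if_linear:
  assumes "\<forall>\<^sub>F i in sequentially. b i \<le> real i * a i"
  shows "\<not> summable (\<lambda>j. a (Suc j) / b (Suc j))"
proof
  assume summable: "summable (\<lambda>j. a (Suc j) / b (Suc j))"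
  obtain N where N: "\<And>j. N \<le> j \<Longrightarrow> b (Suc j) \<le> real (Suc j) * a (Suc j)"
    using assms[THEN eventually_sequentially_Suc[THEN iffD2]] unfolding eventually_sequentially by blast
  have "summable (\<lambda>j. inverse (real (Suc j)))"
  proof (rule summable_comparison_test'[OF summable, where N = N])
    fix j assume "N \<le> j"
    then show "norm (inverse (real (Suc j))) \<le> a (Suc j) / b (Suc j)"
      using N b_pos[of "Suc j"] by (simp add: field_simps)
  qed
  then show False
    using not_summable_harmonic[where 'a = real] summable_Suc_iff[of "\<lambda>j. inverse (real j)"] by simp
qed

section \<open>Existence, uniqueness and nonexistence\<close>

lemma Fz_le_lambda_s: "0 \<le> z \<Longrightarrow> ereal z \<le> zs a b \<Longrightarrow> Fz a b z \<le> lambda_s a b"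
  unfolding lambda_s_def by (intro SUP_upper) simp

lemma exists_Fz_eq_inside:
  assumes lam: "0 \<le> lam" and w: "0 \<le> w" "ereal w < zs a b" "ereal lam \<le> Fz a b w"
  shows "\<exists>z\<ge>0. ereal z \<le> zs a b \<and> Fz a b z = ereal lam"
proof -
  have inside: "ereal x < zs a b" if "0 \<le> x" "x \<le> w" for x
    using that w(2) by (metis ereal_less_eq(3) order.strict_trans1)
  have summable: "summable (\<lambda>n. aQ n * x ^ n)" if "0 \<le> x" "x \<le> w" for x
    using inside[OF that] that(1) by (intro summable_in_conv_radius) (simp add: zs_eq_conv_radius)
  have "continuous_on {0..w} F"
    using inside by (intro continuous_at_imp_continuous_on ballI isCont_F) auto
  moreover have "F 0 \<le> lam" "lam \<le> F w"
    using lam w(3) Fz_eq_F[OF summable[OF w(1) order_refl]] by (simp_all add: F_def)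
  ultimately obtain z where z: "0 \<le> z" "z \<le> w" "F z = lam"
    using IVT'[of F 0 lam w] w(1) by blast
  then show ?thesis
    using inside[OF z(1,2)] Fz_eq_F[OF summable[OF z(1,2)]] by (intro exI[of _ z]) auto
qed

lemma exists_Fz_eq:
  assumes lam: "0 \<le> lam" "ereal lam \<le> lambda_s a b"
  shows "\<exists>z\<ge>0. ereal z \<le> zs a b \<and> Fz a b z = ereal lam"
proof (cases "\<exists>w\<ge>0. ereal w < zs a b \<and> ereal lam \<le> Fz a b w")
  case True
  then show ?thesis using exists_Fz_eq_inside[OF lam(1)] by blast
next
  case False
  then have "zs a b \<noteq> \<infinity>"
    by (intro zs_finite_if_Fz_bounded) (auto simp: not_le)
  then obtain r where r: "zs a b = ereal r" "0 \<le> r"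
    using conv_radius_nonneg[of aQ] by (cases "zs a b") (auto simp: zs_eq_conv_radius)
  have below: "Fz a b x \<le> ereal lam" if "0 \<le> x" "x < r" for x
  proof -
    have "ereal x < zs a b" using r that by simp
    then have "\<not> ereal lam \<le> Fz a b x" using False that(1) by blast
    then show ?thesis by simp
  qed
  have le: "Fz a b r \<le> ereal lam"
  proof (cases "r = 0")
    case False
    then have "0 < r" using r(2) by simp
    then show ?thesis by (rule Fz_le_if_le_left[OF _ below])
  qed (simp add: lam(1))
  have "lambda_s a b \<le> Fz a b r"
    unfolding lambda_s_def using r by (intro SUP_least Fz_mono) auto
  with lam(2) have "ereal lam \<le> Fz a b r" by (rule order_trans)
  with le have "Fz a b r = ereal lam" by (rule antisym)
  then show ?thesis
    using r by (intro exI[of _ r]) simp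
qed

lemma ex1_Fz_eq:
  assumes "0 \<le> lam" "ereal lam \<le> lambda_s a b"
  shows "\<exists>!z. 0 \<le> z \<and> ereal z \<le> zs a b \<and> ereal lam = Fz a b z"
proof (rule ex_ex1I)
  show "\<exists>z. 0 \<le> z \<and> ereal z \<le> zs a b \<and> ereal lam = Fz a b z"
    using exists_Fz_eq[OF assms] by auto
next
  fix z w
  assume "0 \<le> z \<and> ereal z \<le> zs a b \<and> ereal lam = Fz a b z"
    and "0 \<le> w \<and> ereal w \<le> zs a b \<and> ereal lam = Fz a b w"
  then show "z = w" using Fz_inj[of z lam w] by simp
qed

text \<open>Here \<open>Q\<^sub>i\<^sub>+\<^sub>1/Q\<^sub>i = a\<^sub>i/b\<^sub>i\<^sub>+\<^sub>1\<close> tends to \<open>1/z\<^sub>s > 0\<close>, so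
  \<open>a\<^sub>i\<^sub>+\<^sub>1/b\<^sub>i\<^sub>+\<^sub>1 = (a\<^sub>i\<^sub>+\<^sub>1/a\<^sub>i)(a\<^sub>i/b\<^sub>i\<^sub>+\<^sub>1)\<close> stays away from \<open>0\<close>.\<close>

lemma not_summable_ratio_if_limits:
  assumes finite: "zs a b \<noteq> \<infinity>"
    and Q_ratio: "(\<lambda>i. ereal (Q (Suc i) / Q i)) \<longlonglongrightarrow> inverse (zs a b)"
    and a_ratio: "(\<lambda>i. a (Suc i) / a i) \<longlonglongrightarrow> l" "0 < l"
  shows "\<not> summable (\<lambda>j. a (Suc j) / b (Suc j))"
proof
  assume "summable (\<lambda>j. a (Suc j) / b (Suc j))"
  then have lim: "(\<lambda>i. a (Suc i) / b (Suc i)) \<longlonglongrightarrow> 0"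
    by (rule summable_LIMSEQ_zero)
  have "0 < inverse (zs a b)"
    using finite conv_radius_nonneg[of aQ] by (simp add: ereal_0_gt_inverse zs_eq_conv_radius)
  then obtain e where e: "0 < ereal e" "ereal e < inverse (zs a b)"
    using ereal_dense2 by blast
  have "l / 2 < l" using a_ratio(2) by simp
  have "\<forall>\<^sub>F i in sequentially. l / 2 * e \<le> a (Suc i) / b (Suc i)"
    using eventually_ge_at_top[of 1] order_tendstoD(1)[OF Q_ratio e(2)]
      order_tendstoD(1)[OF a_ratio(1) \<open>l / 2 < l\<close>]
  proof eventually_elim
    case (elim i)
    have "e < a i / b (Suc i)"
      using elim(2) Q_Suc[OF elim(1)] Q_pos[of i] by simp
    moreover have "l / 2 \<le> a (Suc i) / a i" "0 \<le> a (Suc i) / a i"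
      using elim(3) a_ratio(2) by linarith+
    ultimately have "l / 2 * e \<le> a (Suc i) / a i * (a i / b (Suc i))"
      using e(1) by (intro mult_mono) auto
    then show ?case
      using a_pos[OF elim(1)] by simp
  qed
  then have "l / 2 * e \<le> 0"
    using tendsto_lowerbound[OF lim _ trivial_limit_sequentially] by blast
  then show False
    using e(1) a_ratio(2) by (simp add: mult_le_0_iff)
qed

lemma no_steady_state_above_lambda_s:
  assumes gt: "lambda_s a b < ereal lam"
    and Q_ratio: "(\<lambda>i. ereal (Q (Suc i) / Q i)) \<longlonglongrightarrow> inverse (zs a b)"
    and a_ratio: "(\<lambda>i. a (Suc i) / a i) \<longlonglongrightarrow> l" "0 < l"
  shows "\<not> steady_state lam a b C"
proof
  assume ss: "steady_state lam a b C"
  have "zs a b \<noteq> \<infinity>"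
    using Fz_le_lambda_s gt
    by (intro zs_finite_if_Fz_bounded[where M = lam]) (meson le_less_trans less_imp_le)
  then have J: "Jflux a b C 1 = 0"
    by (rule flux_zero_if_not_summable_ratio[OF ss not_summable_ratio_if_limits[OF _ Q_ratio a_ratio]])
  have "ereal lam \<le> lambda_s a b"
    using Fz_le_lambda_s[OF steady_state_zero_flux(1,2)[OF ss J]] steady_state_zero_flux(3)[OF ss J]
    by simp
  then show False using gt by simp
qed

lemma steady_state_unique:
  assumes z: "0 \<le> z" "Fz a b z = ereal lam"
    and linear: "\<forall>\<^sub>F i in sequentially. b i \<le> real i * a i"
    and ss: "steady_state lam a b C" and i: "1 \<le> i"
  shows "C i = Q i * z ^ i"
proof -
  have J: "Jflux a b C 1 = 0"
    using flux_zero_if_not_summable_ratio[OF ss not_summable_ratio_if_linear[OF linear]] .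
  have "C 1 = z"
    using Fz_inj[OF steady_state_zero_flux(1)[OF ss J] steady_state_zero_flux(3)[OF ss J] z] .
  with detailed_balance_if_flux_zero[OF ss J i] show ?thesis by simp
qed

section \<open>Infinitely many steady states\<close>

text \<open>A particular solution of the flux equations with \<open>C\<^sub>1\<close> frozen at \<open>c\<close> and every flux equal
  to \<open>-1\<close>; adding \<open>t\<close> times it to \<open>Q\<^sub>i c\<^sup>i\<close> keeps \<open>C\<^sub>1 = c\<close> and shifts every flux by \<open>-t\<close>.\<close>

primrec corrector :: "real \<Rightarrow> nat \<Rightarrow> real" where
  "corrector c 0 = 0"
| "corrector c (Suc n) = (if n = 0 then 0 else (a n * c * corrector c n + 1) / b (Suc n))"

lemma corrector_nonneg: "0 \<le> c \<Longrightarrow> 0 \<le> corrector c n"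
proof (induction n)
  case (Suc n)
  then show ?case
    using a_pos[of n] b_pos[of "Suc n"] by (auto intro!: divide_nonneg_pos add_nonneg_nonneg)
qed simp

lemma corrector_2: "corrector c 2 = 1 / b 2"
  by (simp add: numeral_2_eq_2)

lemma flux_corrector:
  "1 \<le> n \<Longrightarrow> a n * c * corrector c n - b (Suc n) * corrector c (Suc n) = -1"
  using b_pos[of "Suc n"] by simp

lemma summable_ratio_if_superlinear:
  assumes nu: "1 < \<nu>" and super: "\<forall>\<^sub>F i in sequentially. real i powr \<nu> * a i < b i"
  shows "summable (\<lambda>n. a n / b n)"
proof (rule summable_comparison_test_ev)
  show "summable (\<lambda>n. real n powr - \<nu>)"
    using nu by (simp add: summable_real_powr_iff)
  show "\<forall>\<^sub>F n in sequentially. norm (a n / b n) \<le> real n powr - \<nu>"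
    using super eventually_ge_at_top[of 1]
  proof eventually_elim
    case (elim n)
    have "a n \<le> real n powr - \<nu> * b n"
      using elim(1) elim(2) by (simp add: powr_minus field_simps)
    then show ?case
      using a_pos[OF elim(2)] b_pos[OF elim(2)] by (simp add: divide_le_eq mult.commute)
  qed
qed

lemma summable_corrector:
  assumes c: "0 \<le> c" and nu: "1 < \<nu>" and super: "\<forall>\<^sub>F i in sequentially. real i powr \<nu> * a i < b i"
  shows "summable (\<lambda>j. a (Suc j) * corrector c (Suc j))"
proof -
  have "summable (\<lambda>n. a n * corrector c n)"
  proof (rule summable_of_recursive_bound[OF summable_ratio_if_superlinear[OF nu super] c])
    show "\<forall>\<^sub>F n in sequentially. 0 \<le> a n * corrector c n \<and> 0 \<le> a n / b n
        \<and> a (Suc n) * corrector c (Suc n) \<le> a (Suc n) / b (Suc n) * (c * (a n * corrector c n) + 1)"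
      using eventually_ge_at_top[of 1]
      by eventually_elim
        (use a_pos b_pos corrector_nonneg[OF c] in \<open>auto simp: less_imp_le mult_ac\<close>)
  qed
  then show ?thesis
    using summable_Suc_iff[of "\<lambda>n. a n * corrector c n"] by (simp del: corrector.simps)
qed

definition corrected_state :: "real \<Rightarrow> real \<Rightarrow> nat \<Rightarrow> real" where
  "corrected_state c t i = (if i = 0 then 0 else Q i * c ^ i + t * corrector c i)"

lemma corrected_state_1 [simp]: "corrected_state c t 1 = c" "corrected_state c t (Suc 0) = c"
  by (simp_all add: corrected_state_def)

lemma flux_corrected_state: "1 \<le> i \<Longrightarrow> Jflux a b (corrected_state c t) i = - t"
proof -
  assume i: "1 \<le> i"
  have "Jflux a b (corrected_state c t) i
      = Jflux a b (\<lambda>i. Q i * c ^ i) i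
        + t * (a i * c * corrector c i - b (Suc i) * corrector c (Suc i))"
    using i by (simp add: Jflux_def corrected_state_def algebra_simps)
  then show ?thesis
    using flux_detailed_balance[OF i] flux_corrector[OF i] by simp
qed

lemma steady_state_corrected_state:
  assumes c: "0 \<le> c" "summable (\<lambda>n. aQ n * c ^ n)" and t: "0 \<le> t"
    and corr: "summable (\<lambda>j. a (Suc j) * corrector c (Suc j))"
  shows "steady_state (F c + c * t * (\<Sum>j. a (Suc j) * corrector c (Suc j))) a b (corrected_state c t)"
proof -
  define S where "S = (\<Sum>n. aQ n * c ^ n)"
  define B where "B = (\<Sum>j. a (Suc j) * corrector c (Suc j))"
  have split: "a (Suc j) * corrected_state c t (Suc j)
      = aQ (Suc j) * c ^ Suc j + t * (a (Suc j) * corrector c (Suc j))" for j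
    by (simp add: corrected_state_def aQ_def algebra_simps)
  have sums: "(\<lambda>j. a (Suc j) * corrected_state c t (Suc j)) sums (S + t * B)"
    unfolding split S_def B_def
    by (intro sums_add sums_mult sums_aQ_Suc[THEN iffD2] summable_sums c(2) corr)
  then have "(\<lambda>j. a (Suc j) * corrected_state c t 1 * corrected_state c t (Suc j)) sums (c * (S + t * B))"
    using sums_mult[OF sums, of c] by (simp only: corrected_state_1 mult_ac)
  moreover have "F c = c * S + a 1 * c\<^sup>2" by (simp add: F_def S_def)
  ultimately show ?thesis
    unfolding steady_state_def B_def[symmetric]
  proof (intro conjI allI impI)
    show "0 \<le> corrected_state c t i" for i
      using c t by (simp add: corrected_state_def Q_pos corrector_nonneg less_imp_le)
  qed (use sums in \<open>auto simp: sums_iff flux_corrected_state algebra_simps\<close>)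
qed

lemma corrected_state_mem_steady_states:
  assumes nu: "1 < \<nu>" and super: "\<forall>\<^sub>F i in sequentially. real i powr \<nu> * a i < b i"
    and c: "0 \<le> c" "summable (\<lambda>n. aQ n * c ^ n)" and t: "0 \<le> t"
    and lam: "lam = F c + c * t * (\<Sum>j. a (Suc j) * corrector c (Suc j))"
  shows "corrected_state c t \<in> {C. steady_state lam a b C \<and> C 0 = 0}"
  using steady_state_corrected_state[OF c t summable_corrector[OF c(1) nu super]] lam
  by (simp add: corrected_state_def)

lemma infinite_steady_states_0:
  assumes nu: "1 < \<nu>" and super: "\<forall>\<^sub>F i in sequentially. real i powr \<nu> * a i < b i"
  shows "infinite {C. steady_state 0 a b C \<and> C 0 = 0}"
proof -
  have inj: "inj_on (corrected_state 0) {0<..}"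
  proof (rule inj_onI)
    fix s t :: real assume "corrected_state 0 s = corrected_state 0 t"
    then have "corrected_state 0 s 2 = corrected_state 0 t 2" by simp
    then show "s = t" using corrector_2 b_pos[of 2] by (simp add: corrected_state_def)
  qed
  have "corrected_state 0 ` {0<..} \<subseteq> {C. steady_state 0 a b C \<and> C 0 = 0}"
    using corrected_state_mem_steady_states[OF nu super, of 0] by (auto simp: F_def)
  then show ?thesis
    using inj_on_finite[OF inj] infinite_Ioi by blast
qed

lemma infinite_steady_states:
  assumes nu: "1 < \<nu>" and super: "\<forall>\<^sub>F i in sequentially. real i powr \<nu> * a i < b i"
    and z: "0 \<le> z" "Fz a b z = ereal lam"
  shows "infinite {C. steady_state lam a b C \<and> C 0 = 0}"
proof (cases "lam = 0")
  case True
  then show ?thesis using infinite_steady_states_0[OF nu super] by simp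
next
  case False
  then have "0 < z" using z by (cases "z = 0") auto
  have sz: "summable (\<lambda>n. aQ n * z ^ n)"
    using z summable_if_Fz_finite by simp
  have lam: "lam = F z"
    using z(2) Fz_eq_F[OF sz] by simp
  define B where "B c = (\<Sum>j. a (Suc j) * corrector c (Suc j))" for c
  define f where "f c = corrected_state c ((lam - F c) / (c * B c))" for c
  have "f ` {0<..<z} \<subseteq> {C. steady_state lam a b C \<and> C 0 = 0}"
  proof (rule image_subsetI)
    fix c assume "c \<in> {0<..<z}"
    then have c: "0 < c" "c < z" by auto
    have "summable (\<lambda>n. aQ n * c ^ n)" "F c < lam"
      using F_strict_mono[OF _ c(2) sz] c lam by auto
    moreover have "0 < B c"
      unfolding B_def using a_pos b_pos corrector_nonneg c
      by (intro suminf_pos2[OF summable_corrector[OF _ nu super], of _ 1])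
        (auto simp: corrector_2 less_imp_le)
    ultimately show "f c \<in> {C. steady_state lam a b C \<and> C 0 = 0}"
      unfolding f_def using c
      by (intro corrected_state_mem_steady_states[OF nu super]) (auto simp: B_def)
  qed
  moreover have "inj_on f {0<..<z}"
  proof (rule inj_onI)
    fix s t assume "f s = f t"
    then have "f s 1 = f t 1" by simp
    then show "s = t" by (simp only: f_def corrected_state_1)
  qed
  ultimately show ?thesis
    using inj_on_finite infinite_Ioo[OF \<open>0 < z\<close>] by blast
qed

end

theorem mainTheorem13:
  fixes a b :: "nat \<Rightarrow> real" and lam \<alpha> :: real
  assumes lam_nonneg: "0 \<le> lam"
    and alpha: "0 \<le> \<alpha>" "\<alpha> \<le> 1"
    and H1: "\<exists>A\<ge>0. \<forall>i\<ge>1. 0 \<le> a i \<and> a i \<le> A * real i powr \<alpha> \<and> 0 \<le> b i"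
    and H2: "(INF i\<in>{1..}. a i) > 0" "(INF i\<in>{1..}. b i) > 0"
    and H3: "(\<lambda>i. ereal (Qc a b (Suc i) / Qc a b i)) \<longlonglongrightarrow> inverse (zs a b)"
    and H4: "\<exists>l>0. (\<lambda>i. a (Suc i) / a i) \<longlonglongrightarrow> l"
  shows
    "(ereal lam \<le> lambda_s a b \<longrightarrow>
       (\<exists>!z. 0 \<le> z \<and> ereal z \<le> zs a b \<and> ereal lam = Fz a b z) \<and>
       (\<forall>z. 0 \<le> z \<and> ereal z \<le> zs a b \<and> ereal lam = Fz a b z \<longrightarrow>
          steady_state lam a b (\<lambda>i. Qc a b i * z ^ i) \<and>
          ((\<forall>\<^sub>F i in sequentially. b i \<le> real i * a i) \<longrightarrow>
             (\<forall>C. steady_state lam a b C \<longrightarrow> (\<forall>i\<ge>1. C i = Qc a b i * z ^ i))) \<and>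
          ((\<exists>\<nu>>1. \<forall>\<^sub>F i in sequentially. b i > real i powr \<nu> * a i) \<longrightarrow>
             infinite {C. steady_state lam a b C \<and> C 0 = 0})))
     \<and> (ereal lam > lambda_s a b \<longrightarrow> \<not> (\<exists>C. steady_state lam a b C))"
proof -
  \<comment> \<open>Only the sign conditions of (H1) are used, to turn the infima of (H2) into lower bounds.\<close>
  interpret positive_rates a b
    using H1 H2 by unfold_locales (auto intro: pos_if_INF_pos)
  obtain l where l: "0 < l" "(\<lambda>i. a (Suc i) / a i) \<longlonglongrightarrow> l"
    using H4 by blast
  show ?thesis
  proof (intro conjI impI allI)
    show "\<exists>!z. 0 \<le> z \<and> ereal z \<le> zs a b \<and> ereal lam = Fz a b z"
      if "ereal lam \<le> lambda_s a b"
      using ex1_Fz_eq[OF lam_nonneg that] .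
    show "steady_state lam a b (\<lambda>i. Qc a b i * z ^ i)"
      if "0 \<le> z \<and> ereal z \<le> zs a b \<and> ereal lam = Fz a b z" for z
      using that by (simp add: steady_state_detailed_balance_iff)
    show "C i = Qc a b i * z ^ i"
      if "0 \<le> z \<and> ereal z \<le> zs a b \<and> ereal lam = Fz a b z"
        "\<forall>\<^sub>F i in sequentially. b i \<le> real i * a i" "steady_state lam a b C" "1 \<le> i"
      for z C and i :: nat
      using that(1) steady_state_unique[OF _ _ that(2-4), of z] by simp
    show "infinite {C. steady_state lam a b C \<and> C 0 = 0}"
      if "0 \<le> z \<and> ereal z \<le> zs a b \<and> ereal lam = Fz a b z"
        "\<exists>\<nu>>1. \<forall>\<^sub>F i in sequentially. b i > real i powr \<nu> * a i" for z
      using that infinite_steady_states by auto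
    show "\<not> (\<exists>C. steady_state lam a b C)" if "lambda_s a b < ereal lam"
      using no_steady_state_above_lambda_s[OF that H3 l(2,1)] by blast
  qed
qed

end
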